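(* Let $X$ be a Fr\'echet space with a translation-invariant metric $d$ (i.e. $d(u,v)=d(u+w,v+w)$), let $\mathfrak F\subseteq\mathfrak S$, and let $\pi:X\to X$ be a continuous linear projection onto a finite-dimensional subspace $W=\pi(X)$. For $v\in X$ and $\varepsilon>0$ put $B^{\pi,v}(\varepsilon)=\{v+w:w\in W,\ d(0,w)\le\varepsilon\}$. Suppose: (i) $\mathbb D(\mathfrak F)$ is approximately controllable on $X$, i.e. $\overline{A_{\mathbb D(\mathfrak F)}(u,t)}=X$ for all $u\in X$, $t>0$; (ii) for every $v\in X$ and $\varepsilon,\varepsilon',t>0$ there exist $\tilde u\in X$, $\Phi^1,\dots,\Phi^k\in\mathfrak F$, times $s_1,\dots,s_k>0$ with $\sum_js_j\le t$, and continuous maps $g_j:B^{\pi,v}(\varepsilon)\to\mathcal P(\Phi^j)$ such that $\sup_{\tilde v\in B^{\pi,v}(\varepsilon)}d\big(\Phi^{k,g_k(\tilde v)}_{s_k}\cdots\Phi^{1,g_1(\tilde v)}_{s_1}\tilde u,\ \tilde v\big)<\varepsilon'$. Then for all $u,v\in X$ and $t,\varepsilon>0$ there exist $\Psi^1,\dots,\Psi^n\in\mathbb D(\mathfrak F)$ and $t_1,\dots,t_n>0$ with $t_1+\dots+t_n=t$ such that $\pi(\Psi^n_{t_n}\cdots\Psi^1_{t_1}u)=\pi(v)$ and $d(\Psi^n_{t_n}\cdots\Psi^1_{t_1}u,v)<\varepsilon$.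
   Context: $\dagger\notin X$ is an extra (explosive) point and $(Y,d_Y)$ an auxiliary metric space. For nonempty $Z\subseteq Y$, a one-parameter family of continuous local semigroups on $X$ parametrized by $Z$ is a map $(t,u,p)\mapsto\Phi^p_tu:[0,\infty)\times X\times Z\to X\cup\{\dagger\}$ such that for every $u\in X$, $p\in Z$ there is $T_{u,p}>0$ with: (i) $\Phi^p_tu\in X$ for $t<T_{u,p}$ and $=\dagger$ for $t\ge T_{u,p}$; (ii) $\Phi^p_0u=u$ and for $s,t\ge0$ with $s+t<T_{u,p}$, $t<T_{\Phi^p_su,p}$ and $\Phi^p_{t+s}u=\Phi^p_t\Phi^p_su$; (iii) for every $t<T_{u,p}$, $\varepsilon>0$ there is $\delta>0$ such that $|t-t'|+d(u,u')+d_Y(p,p')<\delta$ implies $t'<T_{u',p'}$ and $d(\Phi^p_tu,\Phi^{p'}_{t'}u')<\varepsilon$. $\mathfrak S$ is the set of all such families, $\mathcal P(\Phi)$ the parameter set of $\Phi$, and for $\mathfrak F\subseteq\mathfrak S$, $\mathbb D(\mathfrak F)=\{\Phi^p:\Phi\in\mathfrak F,\ p\in\mathcal P(\Phi)\}$, where $\Phi^p$ is the continuous local semigroup $(t,u)\mapsto\Phi^p_tu$. Compositions are only considered when all partial compositions lie in $X$. For a set $\mathcal F$ of continuous local semigroups, $A_{\mathcal F}(u,t)=\{\Phi^n_{t_n}\cdots\Phi^1_{t_1}u:\Phi^j\in\mathcal F,t_j>0,\sum t_j=t\}$. *)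

theory Defs
  imports "HOL-Analysis.Analysis" "HOL-Library.Extended_Real"
begin

text \<open>The explosive point is modelled by None; a state of X is Some u.
  A one-parameter family of continuous local semigroups is a pair (Phi, Z):
  Phi t u p is the value at time t, starting point u, parameter p (only
  t \<ge> 0 and p \<in> Z matter), and Z is the nonempty parameter set.\<close>

type_synonym ('a, 'p) family = "(real \<Rightarrow> 'a \<Rightarrow> 'p \<Rightarrow> 'a option) \<times> 'p set"
type_synonym 'a lsg = "real \<Rightarrow> 'a \<Rightarrow> 'a option"

definition frechet_space :: "'a::{real_vector,complete_space} itself \<Rightarrow> bool" where
  "frechet_space _ \<longleftrightarrow>
     (\<forall>u v w :: 'a. dist u v = dist (u + w) (v + w)) \<and>
     continuous_on UNIV (\<lambda>q::'a \<times> 'a. fst q + snd q) \<and>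
     continuous_on UNIV (\<lambda>q::real \<times> 'a. fst q *\<^sub>R snd q) \<and>
     (\<forall>U::'a set. open U \<and> 0 \<in> U \<longrightarrow> (\<exists>V. open V \<and> convex V \<and> 0 \<in> V \<and> V \<subseteq> U))"

definition is_family :: "('a::metric_space, 'p::metric_space) family \<Rightarrow> bool" where
  "is_family F \<longleftrightarrow> (case F of (Phi, Z) \<Rightarrow>
     Z \<noteq> {} \<and>
     (\<forall>u. \<forall>p\<in>Z.
        (\<exists>T::ereal. T > 0 \<and> (\<forall>t\<ge>0. Phi t u p \<noteq> None \<longleftrightarrow> ereal t < T)) \<and>
        Phi 0 u p = Some u \<and>
        (\<forall>s\<ge>0. \<forall>t\<ge>0. \<forall>w. Phi (t + s) u p = Some w \<longrightarrow>
             (\<exists>y. Phi s u p = Some y \<and> Phi t y p = Some w)) \<and>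
        (\<forall>t\<ge>0. \<forall>w. Phi t u p = Some w \<longrightarrow>
           (\<forall>e>0. \<exists>\<delta>>0. \<forall>t'\<ge>0. \<forall>u'. \<forall>p'\<in>Z.
              \<bar>t - t'\<bar> + dist u u' + dist p p' < \<delta> \<longrightarrow>
              (\<exists>w'. Phi t' u' p' = Some w' \<and> dist w w' < e)))))"

definition DD :: "('a, 'p) family set \<Rightarrow> 'a lsg set" where
  "DD FF = {(\<lambda>t u. Phi t u p) | Phi Z p. (Phi, Z) \<in> FF \<and> p \<in> Z}"

text \<open>Composition: the list [(S1,t1),...,(Sn,tn)] applied to u gives
  Sn_tn ... S1_t1 u, which is None as soon as some partial composition leaves X.\<close>
fun comp_lsg :: "('a lsg \<times> real) list \<Rightarrow> 'a \<Rightarrow> 'a option" where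
  "comp_lsg [] u = Some u"
| "comp_lsg ((S, t) # xs) u = (case S t u of None \<Rightarrow> None | Some w \<Rightarrow> comp_lsg xs w)"

definition attainable :: "'a lsg set \<Rightarrow> 'a \<Rightarrow> real \<Rightarrow> 'a set" where
  "attainable F u t = {w. \<exists>xs. xs \<noteq> [] \<and> (\<forall>(S, s) \<in> set xs. S \<in> F \<and> s > 0) \<and>
       sum_list (map snd xs) = t \<and> comp_lsg xs u = Some w}"

definition Bpi :: "('a::{real_vector,metric_space} \<Rightarrow> 'a) \<Rightarrow> 'a \<Rightarrow> real \<Rightarrow> 'a set" where
  "Bpi \<pi> v e = {v + w | w. w \<in> range \<pi> \<and> dist 0 w \<le> e}"

end

theory Submission
  imports Defs "HOL-Homology.Homology"
begin

text \<open>Fix coordinates on the finite-dimensional range W of \<pi>. Hypothesis (ii) provides, for every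
  target y in a small coordinate disc D around v, controlled trajectories from a common point
  ending near y, with controls depending continuously on y. By approximate controllability we
  first steer u so close to that common point that, by continuity of the flows in the initial
  state (uniform on the compact disc), every endpoint still lands near its target. The endpoint
  map is then a continuous small perturbation of the identity of D, and since the sphere is not
  contractible (a Brouwer-type argument) some endpoint lies in the fibre of \<pi> over \<pi> v.\<close>

section \<open>Coordinate discs and a zero theorem\<close>

text \<open>Points of m-dimensional space are functions vanishing from index m on, as in the topology
  Euclidean_space m of HOL-Homology.\<close>

definition fin_coords :: "nat \<Rightarrow> (nat \<Rightarrow> real) set" where
  "fin_coords m = {x. \<forall>i\<ge>m. x i = 0}"

definition coord_norm :: "nat \<Rightarrow> (nat \<Rightarrow> real) \<Rightarrow> real" where
  "coord_norm m x = sqrt (\<Sum>i<m. (x i)\<^sup>2)"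

definition coord_ball :: "nat \<Rightarrow> real \<Rightarrow> (nat \<Rightarrow> real) set" where
  "coord_ball m r = {x \<in> fin_coords m. coord_norm m x \<le> r}"

definition coord_sphere :: "nat \<Rightarrow> real \<Rightarrow> (nat \<Rightarrow> real) set" where
  "coord_sphere m r = {x \<in> fin_coords m. coord_norm m x = r}"

definition coord_normalize :: "nat \<Rightarrow> (nat \<Rightarrow> real) \<Rightarrow> nat \<Rightarrow> real" where
  "coord_normalize m y = (\<lambda>i. y i / coord_norm m y)"

lemma coord_norm_nonneg: "coord_norm m x \<ge> 0"
  by (simp add: coord_norm_def sum_nonneg)

lemma coord_norm_scale: "coord_norm m (\<lambda>i. c * x i) = \<bar>c\<bar> * coord_norm m x"
proof -
  have "(\<Sum>i<m. (c * x i)\<^sup>2) = c\<^sup>2 * (\<Sum>i<m. (x i)\<^sup>2)"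
    by (simp add: power_mult_distrib sum_distrib_left)
  then show ?thesis by (simp add: coord_norm_def real_sqrt_mult)
qed

lemma coord_norm_eq_0:
  assumes "x \<in> fin_coords m" "coord_norm m x = 0"
  shows "x = (\<lambda>i. 0)"
proof
  fix i
  have "\<forall>j\<in>{..<m}. (x j)\<^sup>2 = 0"
    using assms(2) by (subst sum_nonneg_eq_0_iff[symmetric]) (auto simp: coord_norm_def)
  then show "x i = 0"
    using assms(1) by (cases "i < m") (auto simp: fin_coords_def)
qed

lemma abs_coord_le_coord_norm: "i < m \<Longrightarrow> \<bar>x i\<bar> \<le> coord_norm m x"
proof -
  assume "i < m"
  then have "(x i)\<^sup>2 \<le> (\<Sum>j<m. (x j)\<^sup>2)"
    by (intro member_le_sum) auto
  then show ?thesis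
    unfolding coord_norm_def by (metis real_sqrt_abs real_sqrt_le_mono)
qed

lemma continuous_on_coord_norm [continuous_intros]:
  "continuous_on S f \<Longrightarrow> continuous_on S (\<lambda>x. coord_norm m (f x))"
proof -
  assume "continuous_on S f"
  then have "continuous_on S (\<lambda>x. f x i)" for i
    by (rule continuous_on_product_then_coordinatewise)
  then show ?thesis
    unfolding coord_norm_def by (intro continuous_intros)
qed

lemma continuous_on_coord_normalize:
  assumes "continuous_on S f" "\<And>z. z \<in> S \<Longrightarrow> coord_norm m (f z) \<noteq> 0"
  shows "continuous_on S (\<lambda>z. coord_normalize m (f z))"
proof -
  have "continuous_on S (\<lambda>x. f x i)" for i
    using assms(1) by (rule continuous_on_product_then_coordinatewise)
  then show ?thesis
    unfolding coord_normalize_def using assms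
    by (intro continuous_on_coordinatewise_then_product continuous_on_divide
        continuous_on_coord_norm) auto
qed

lemma coord_normalize_in_sphere:
  assumes "y \<in> fin_coords m" "coord_norm m y > 0"
  shows "coord_normalize m y \<in> coord_sphere m 1"
proof -
  have "coord_normalize m y = (\<lambda>i. (1 / coord_norm m y) * y i)"
    by (simp add: coord_normalize_def)
  then show ?thesis
    using assms coord_norm_scale[of m "1 / coord_norm m y" y]
    by (simp add: coord_sphere_def fin_coords_def coord_normalize_def)
qed

lemma coord_normalize_sphere: "x \<in> coord_sphere m 1 \<Longrightarrow> coord_normalize m x = x"
  by (simp add: coord_sphere_def coord_normalize_def)

lemma closed_fin_coords: "closed (fin_coords m)"
proof -
  have "fin_coords m = (\<Inter>i\<in>{m..}. {x. x i = 0})"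
    by (auto simp: fin_coords_def)
  moreover have "closed {x::nat\<Rightarrow>real. x i = 0}" for i
    using closed_Collect_eq[of "\<lambda>x::nat\<Rightarrow>real. x i" "\<lambda>x. 0"] by simp
  ultimately show ?thesis by auto
qed

lemma compact_coord_ball: "compact (coord_ball m r)"
proof -
  define K where "K = PiE UNIV (\<lambda>i. if i < m then {-r..r} else {0::real})"
  have "compactin (product_topology (\<lambda>i. euclidean) UNIV) K"
    unfolding K_def compactin_PiE by auto
  then have "compact K"
    by (simp add: euclidean_product_topology)
  moreover have "closed (coord_ball m r)"
    using closed_fin_coords unfolding coord_ball_def Collect_conj_eq Collect_mem_eq
    by (intro closed_Int closed_Collect_le continuous_intros)
  moreover have "x \<in> K" if "x \<in> coord_ball m r" for x
    unfolding K_def PiE_UNIV_domain Pi_iff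
  proof
    fix i
    show "x i \<in> (if i < m then {-r..r} else {0})"
      using that abs_coord_le_coord_norm[of i m x]
      by (auto simp: coord_ball_def fin_coords_def abs_le_iff)
  qed
  ultimately show ?thesis
    by (metis compact_Int_closed subsetI inf.absorb2)
qed

lemma compact_coord_sphere: "compact (coord_sphere m r)"
proof -
  have "coord_sphere m r = coord_ball m r \<inter> {x. coord_norm m x = r}"
    by (auto simp: coord_sphere_def coord_ball_def)
  moreover have "closed {x. coord_norm m x = r}"
    by (intro closed_Collect_eq continuous_intros)
  ultimately show ?thesis
    by (simp add: compact_Int_closed compact_coord_ball)
qed

lemma nsphere_eq_coord_sphere:
  assumes "0 < m"
  shows "nsphere (m - 1) = top_of_set (coord_sphere m 1)"
proof -
  have "{..m - 1} = {..<m}" and "(\<forall>i>m - 1. x i = 0) = (\<forall>i\<ge>m. x i = (0::real))" for x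
    using assms by auto
  then have "{x. (\<Sum>i\<le>m - 1. x i ^ 2) = 1 \<and> (\<forall>i>m - 1. x i = 0)} = coord_sphere m 1"
    by (auto simp: coord_sphere_def fin_coords_def coord_norm_def)
  then show ?thesis
    by (simp add: nsphere euclidean_product_topology)
qed

lemma not_contractible_coord_sphere: "0 < m \<Longrightarrow> \<not> contractible (coord_sphere m 1)"
  using non_contractible_space_nsphere[of "m - 1"] nsphere_eq_coord_sphere by force

lemma homotopic_with_canon_iff_homotopy:
  "homotopic_with_canon (\<lambda>_. True) S T p q \<longleftrightarrow>
     (\<exists>h. continuous_on ({0..1::real} \<times> S) h \<and> h ` ({0..1} \<times> S) \<subseteq> T \<and>
          (\<forall>x\<in>S. h (0, x) = p x) \<and> (\<forall>x\<in>S. h (1, x) = q x))"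
  by (simp add: homotopic_with continuous_map_in_subtopology image_subset_iff_funcset)

lemma homotopic_normalize_sphere_map_id:
  assumes contF: "continuous_on (coord_sphere m 1) F"
    and F: "F ` coord_sphere m 1 \<subseteq> fin_coords m"
    and close: "\<And>x. x \<in> coord_sphere m 1 \<Longrightarrow> coord_norm m (\<lambda>i. F x i - x i) < 1"
  shows "homotopic_with_canon (\<lambda>_. True) (coord_sphere m 1) (coord_sphere m 1)
           id (\<lambda>x. coord_normalize m (F x))"
proof -
  define S where "S = coord_sphere m 1"
  define H where "H = (\<lambda>(s::real, x). \<lambda>i. x i + s * (F x i - x i))"
  have H_fin: "H (s, x) \<in> fin_coords m" if "x \<in> S" for s x
  proof -
    have "F x \<in> fin_coords m" "x \<in> fin_coords m"
      using that F by (auto simp: S_def coord_sphere_def)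
    then show ?thesis
      by (simp add: H_def fin_coords_def)
  qed
  have H_nonzero: "coord_norm m (H (s, x)) > 0" if "s \<in> {0..1}" "x \<in> S" for s x
  proof (rule ccontr)
    assume "\<not> ?thesis"
    then have "coord_norm m (H (s, x)) = 0"
      using coord_norm_nonneg[of m "H (s, x)"] by linarith
    then have H0: "H (s, x) = (\<lambda>i. 0)"
      using coord_norm_eq_0 H_fin[OF that(2)] by blast
    have "x i = (- s) * (F x i - x i)" for i
      using fun_cong[OF H0, of i] by (simp add: H_def algebra_simps)
    then have "x = (\<lambda>i. (- s) * (F x i - x i))" ..
    then have "coord_norm m x = s * coord_norm m (\<lambda>i. F x i - x i)"
      using that(1) by (metis abs_minus_cancel abs_of_nonneg atLeastAtMost_iff coord_norm_scale)
    also have "\<dots> < 1"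
      using that close[of x] coord_norm_nonneg[of m]
      by (smt (verit, best) S_def atLeastAtMost_iff mult_left_le_one_le)
    finally show False
      using that(2) by (simp add: S_def coord_sphere_def)
  qed
  have "continuous_on ({0..1} \<times> S) (\<lambda>p. F (snd p))"
    by (rule continuous_on_compose2[OF contF[folded S_def]]) (auto intro: continuous_intros)
  then have "continuous_on ({0..1} \<times> S) (\<lambda>p. F (snd p) i)" for i
    by (rule continuous_on_product_then_coordinatewise)
  moreover have "continuous_on ({0..1} \<times> S) (\<lambda>p. snd p i)" for i :: nat
    by (rule continuous_on_product_then_coordinatewise[OF continuous_on_snd[OF continuous_on_id]])
  ultimately have "continuous_on ({0..1} \<times> S) H"
    unfolding H_def case_prod_unfold
    by (intro continuous_on_coordinatewise_then_product continuous_intros)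
  then have "continuous_on ({0..1} \<times> S) (\<lambda>p. coord_normalize m (H p))"
    using H_nonzero by (intro continuous_on_coord_normalize) force+
  moreover have "(\<lambda>p. coord_normalize m (H p)) ` ({0..1} \<times> S) \<subseteq> S"
    using H_fin H_nonzero coord_normalize_in_sphere by (force simp: S_def)
  ultimately show ?thesis
    unfolding homotopic_with_canon_iff_homotopy S_def[symmetric]
    by (intro exI[of _ "\<lambda>p. coord_normalize m (H p)"])
       (auto simp: H_def S_def coord_normalize_sphere)
qed

lemma homotopic_normalize_ball_map_const:
  assumes contG: "continuous_on (coord_ball m 1) G"
    and G: "\<And>x. x \<in> coord_ball m 1 \<Longrightarrow> G x \<in> fin_coords m \<and> coord_norm m (G x) > 0"
  shows "homotopic_with_canon (\<lambda>_. True) (coord_sphere m 1) (coord_sphere m 1)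
           (\<lambda>x. coord_normalize m (G x)) (\<lambda>x. coord_normalize m (G (\<lambda>i. 0)))"
proof -
  define S where "S = coord_sphere m 1"
  define H where "H = (\<lambda>(s::real, x). G (\<lambda>i. (1 - s) * x i))"
  have shrink: "(\<lambda>i. (1 - s) * x i) \<in> coord_ball m 1" if "s \<in> {0..1}" "x \<in> S" for s x
    using that coord_norm_scale[of m "1 - s" x]
    by (auto simp: S_def coord_sphere_def coord_ball_def fin_coords_def)
  have "continuous_on ({0..1} \<times> S) (\<lambda>p. snd p i)" for i :: nat
    by (rule continuous_on_product_then_coordinatewise[OF continuous_on_snd[OF continuous_on_id]])
  then have "continuous_on ({0..1} \<times> S) (\<lambda>p. \<lambda>i. (1 - fst p) * snd p i)"
    by (intro continuous_on_coordinatewise_then_product continuous_intros)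
  then have "continuous_on ({0..1} \<times> S) H"
    unfolding H_def case_prod_unfold
    by (rule continuous_on_compose2[OF contG]) (use shrink in auto)
  then have "continuous_on ({0..1} \<times> S) (\<lambda>p. coord_normalize m (H p))"
    using G shrink by (intro continuous_on_coord_normalize) (force simp: H_def)+
  moreover have "(\<lambda>p. coord_normalize m (H p)) ` ({0..1} \<times> S) \<subseteq> S"
    using G shrink coord_normalize_in_sphere by (force simp: S_def H_def)
  ultimately show ?thesis
    unfolding homotopic_with_canon_iff_homotopy S_def[symmetric]
    by (intro exI[of _ "\<lambda>p. coord_normalize m (H p)"]) (auto simp: H_def)
qed

text \<open>Otherwise the normalized map would be a null-homotopic map of the sphere homotopic to the
  identity.\<close>

lemma coord_ball_map_has_zero:
  assumes contG: "continuous_on (coord_ball m 1) G"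
    and G: "G ` coord_ball m 1 \<subseteq> fin_coords m"
    and close: "\<And>x. x \<in> coord_sphere m 1 \<Longrightarrow> coord_norm m (\<lambda>i. G x i - x i) < 1"
  shows "\<exists>x\<in>coord_ball m 1. G x = (\<lambda>i. 0)"
proof (cases "m = 0")
  case True
  then have "(\<lambda>i. 0) \<in> coord_ball m 1" "G (\<lambda>i. 0) \<in> fin_coords 0"
    using G by (auto simp: coord_ball_def fin_coords_def coord_norm_def)
  then show ?thesis
    using True by (auto simp: fin_coords_def)
next
  case False
  show ?thesis
  proof (rule ccontr)
    assume "\<not> ?thesis"
    then have nonzero: "G x \<in> fin_coords m \<and> coord_norm m (G x) > 0" if "x \<in> coord_ball m 1" for x
      using that G coord_norm_eq_0[of "G x" m] coord_norm_nonneg[of m "G x"] by force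
    have sphere_ball: "coord_sphere m 1 \<subseteq> coord_ball m 1"
      by (auto simp: coord_sphere_def coord_ball_def)
    have "homotopic_with_canon (\<lambda>_. True) (coord_sphere m 1) (coord_sphere m 1)
            id (\<lambda>x. coord_normalize m (G x))"
      using G close sphere_ball
      by (intro homotopic_normalize_sphere_map_id continuous_on_subset[OF contG]) auto
    moreover have "homotopic_with_canon (\<lambda>_. True) (coord_sphere m 1) (coord_sphere m 1)
            (\<lambda>x. coord_normalize m (G x)) (\<lambda>x. coord_normalize m (G (\<lambda>i. 0)))"
      using contG nonzero by (rule homotopic_normalize_ball_map_const)
    ultimately have "contractible (coord_sphere m 1)"
      unfolding contractible_def by (blast intro: homotopic_with_trans)
    then show False
      using not_contractible_coord_sphere False by blast
  qed
qed

section \<open>Vector spaces with a translation-invariant metric\<close>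

text \<open>Continuity of addition need not be assumed: it follows from translation invariance.\<close>

definition invariant_metric_tvs :: "'a::{real_vector,metric_space} itself \<Rightarrow> bool" where
  "invariant_metric_tvs _ \<longleftrightarrow>
     (\<forall>u v w :: 'a. dist u v = dist (u + w) (v + w)) \<and>
     continuous_on UNIV (\<lambda>q::real \<times> 'a. fst q *\<^sub>R snd q)"

lemma frechet_space_imp_invariant_metric_tvs:
  "frechet_space TYPE('a::{real_vector,complete_space}) \<Longrightarrow> invariant_metric_tvs TYPE('a)"
  by (simp add: frechet_space_def invariant_metric_tvs_def)

context
  assumes tvs: "invariant_metric_tvs TYPE('a::{real_vector,metric_space})"
begin

lemma dist_translate: "dist (u::'a) v = dist (u + w) (v + w)"
  using tvs by (simp add: invariant_metric_tvs_def)

lemma dist_eq_dist0_diff: "dist (u::'a) v = dist 0 (v - u)"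
  using dist_translate[of u v "- u"] by simp

lemma dist0_add_le: "dist 0 ((a::'a) + b) \<le> dist 0 a + dist 0 b"
proof -
  have "dist 0 (a + b) \<le> dist 0 a + dist a (a + b)"
    by (rule dist_triangle)
  also have "dist a (a + b) = dist 0 b"
    by (simp add: dist_eq_dist0_diff[of a])
  finally show ?thesis .
qed

lemma dist0_uminus: "dist 0 (- (a::'a)) = dist 0 a"
  using dist_eq_dist0_diff[of "- a" 0] by (simp add: dist_commute)

lemma Bpi_dist_le: "y \<in> Bpi \<pi> v e \<Longrightarrow> dist y (v::'a) \<le> e"
  using dist_eq_dist0_diff[of "v + w" v for w] dist0_uminus by (auto simp: Bpi_def)

lemma dist0_sum_le: "dist 0 (\<Sum>i\<in>I. f i :: 'a) \<le> (\<Sum>i\<in>I. dist 0 (f i))"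
proof (induction I rule: infinite_finite_induct)
  case (insert x F)
  then show ?case
    using dist0_add_le[of "f x" "sum f F"] by simp
qed auto

lemma dist0_of_nat_scaleR_le: "dist 0 (real k *\<^sub>R (a::'a)) \<le> real k * dist 0 a"
proof (induction k)
  case (Suc k)
  have "real (Suc k) *\<^sub>R a = a + real k *\<^sub>R a"
    by (simp add: algebra_simps)
  then show ?case
    using dist0_add_le[of a "real k *\<^sub>R a"] Suc by (simp add: algebra_simps)
qed simp

lemma dist_add_add_le: "dist ((a::'a) + b) (a' + b') \<le> dist a a' + dist b b'"
proof -
  have "dist (a + b) (a' + b') \<le> dist (a + b) (a' + b) + dist (a' + b) (a' + b')"
    by (rule dist_triangle)
  also have "\<dots> = dist a a' + dist b b'"
    using dist_translate[of a a' b] dist_translate[of b b' a'] by (simp add: add.commute)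
  finally show ?thesis .
qed

lemma continuous_on_add_tvs:
  assumes "continuous_on A f" "continuous_on A g"
  shows "continuous_on A (\<lambda>x. f x + g x :: 'a)"
proof -
  have "lipschitz_on 2 UNIV (\<lambda>q::'a \<times> 'a. fst q + snd q)"
  proof (rule lipschitz_onI)
    fix q q' :: "'a \<times> 'a"
    have "dist (fst q) (fst q') \<le> dist q q'" "dist (snd q) (snd q') \<le> dist q q'"
      by (simp_all add: dist_fst_le dist_snd_le)
    then show "dist (fst q + snd q) (fst q' + snd q') \<le> 2 * dist q q'"
      using dist_add_add_le[of "fst q" "snd q" "fst q'" "snd q'"] by linarith
  qed simp
  then have "continuous_on UNIV (\<lambda>q::'a \<times> 'a. fst q + snd q)"
    by (rule lipschitz_on_continuous_on)
  then show ?thesis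
    using continuous_on_compose2[OF _ continuous_on_Pair[OF assms]] by fastforce
qed

lemma continuous_on_scaleR_tvs:
  assumes "continuous_on A f" "continuous_on A g"
  shows "continuous_on A (\<lambda>x. f x *\<^sub>R g x :: 'a)"
proof -
  have "continuous_on UNIV (\<lambda>q::real \<times> 'a. fst q *\<^sub>R snd q)"
    using tvs by (simp add: invariant_metric_tvs_def)
  then show ?thesis
    using continuous_on_compose2[OF _ continuous_on_Pair[OF assms]] by fastforce
qed

lemma continuous_on_sum_tvs:
  "(\<And>i. i \<in> I \<Longrightarrow> continuous_on A (f i)) \<Longrightarrow> continuous_on A (\<lambda>x. \<Sum>i\<in>I. f i x :: 'a)"
proof (induction I rule: infinite_finite_induct)
  case (insert x F)
  then show ?case
    by (simp add: continuous_on_add_tvs)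
qed auto

lemma scaleR_small_small:
  assumes "e > 0"
  shows "\<exists>d>0. \<forall>(l::real) (z::'a). \<bar>l\<bar> < d \<and> dist 0 z < d \<longrightarrow> dist 0 (l *\<^sub>R z) < e"
proof -
  have "continuous_on UNIV (\<lambda>q::real \<times> 'a. fst q *\<^sub>R snd q)"
    using tvs by (simp add: invariant_metric_tvs_def)
  then have "isCont (\<lambda>q::real \<times> 'a. fst q *\<^sub>R snd q) (0, 0)"
    by (simp add: continuous_on_eq_continuous_at)
  then obtain d where d: "d > 0" "\<forall>q::real \<times> 'a. dist q (0, 0) < d \<longrightarrow> dist (fst q *\<^sub>R snd q) 0 < e"
    using assms unfolding continuous_at_eps_delta by force
  show ?thesis
  proof (intro exI[of _ "d / 2"] conjI allI impI)
    fix l :: real and z :: 'a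
    assume small: "\<bar>l\<bar> < d / 2 \<and> dist 0 z < d / 2"
    have "dist (l, z) (0, 0) \<le> dist l 0 + dist z 0"
      using sqrt_sum_squares_le_sum_abs[of "dist l 0" "dist z 0"] by (simp add: dist_Pair_Pair)
    also have "\<dots> < d"
      using small by (simp add: dist_commute dist_real_def)
    finally show "dist 0 (l *\<^sub>R z) < e"
      using d by (simp add: dist_commute)
  qed (use d in auto)
qed

end

section \<open>Finite linear combinations and their coordinates\<close>

definition lincomb :: "nat \<Rightarrow> (nat \<Rightarrow> 'a::real_vector) \<Rightarrow> (nat \<Rightarrow> real) \<Rightarrow> 'a" where
  "lincomb m b x = (\<Sum>i<m. x i *\<^sub>R b i)"

definition lincomb_independent :: "nat \<Rightarrow> (nat \<Rightarrow> 'a::real_vector) \<Rightarrow> bool" where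
  "lincomb_independent m b \<longleftrightarrow> (\<forall>x\<in>fin_coords m. lincomb m b x = 0 \<longrightarrow> x = (\<lambda>i. 0))"

text \<open>Only meaningful on range (lincomb m b); elsewhere SOME picks an arbitrary value.\<close>

definition lincomb_coords :: "nat \<Rightarrow> (nat \<Rightarrow> 'a::real_vector) \<Rightarrow> 'a \<Rightarrow> nat \<Rightarrow> real" where
  "lincomb_coords m b w = (SOME x. x \<in> fin_coords m \<and> lincomb m b x = w)"

lemma lincomb_diff: "lincomb m b (\<lambda>i. x i - y i) = lincomb m b x - lincomb m b y"
  by (simp add: lincomb_def scaleR_diff_left sum_subtractf)

lemma lincomb_scale: "lincomb m b (\<lambda>i. c * x i) = c *\<^sub>R lincomb m b x"
  by (simp add: lincomb_def scaleR_sum_right)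

lemma lincomb_zero [simp]: "lincomb m b (\<lambda>i. 0) = 0"
  by (simp add: lincomb_def)

lemma range_lincomb_fin_coords: "range (lincomb m b) = lincomb m b ` fin_coords m"
proof
  show "range (lincomb m b) \<subseteq> lincomb m b ` fin_coords m"
  proof clarify
    fix x
    have "lincomb m b x = lincomb m b (\<lambda>i. if i < m then x i else 0)"
      unfolding lincomb_def by (rule sum.cong) auto
    then show "lincomb m b x \<in> lincomb m b ` fin_coords m"
      unfolding image_iff fin_coords_def by (intro bexI[of _ "\<lambda>i. if i < m then x i else 0"]) auto
  qed
qed auto

lemma lincomb_lincomb_coords:
  assumes "w \<in> range (lincomb m b)"
  shows "lincomb_coords m b w \<in> fin_coords m" "lincomb m b (lincomb_coords m b w) = w"
proof -
  have "\<exists>x. x \<in> fin_coords m \<and> lincomb m b x = w"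
    using assms unfolding range_lincomb_fin_coords by auto
  then have "lincomb_coords m b w \<in> fin_coords m \<and> lincomb m b (lincomb_coords m b w) = w"
    unfolding lincomb_coords_def by (rule someI_ex)
  then show "lincomb_coords m b w \<in> fin_coords m" "lincomb m b (lincomb_coords m b w) = w"
    by auto
qed

lemma lincomb_coords_lincomb:
  assumes "lincomb_independent m b" "x \<in> fin_coords m"
  shows "lincomb_coords m b (lincomb m b x) = x"
proof -
  define y where "y = lincomb_coords m b (lincomb m b x)"
  have y: "y \<in> fin_coords m" "lincomb m b y = lincomb m b x"
    using lincomb_lincomb_coords[of "lincomb m b x" m b] by (auto simp: y_def)
  then have "(\<lambda>i. y i - x i) \<in> fin_coords m" "lincomb m b (\<lambda>i. y i - x i) = 0"
    using assms(2) by (auto simp: fin_coords_def lincomb_diff)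
  then have "(\<lambda>i. y i - x i) = (\<lambda>i. 0)"
    using assms(1) by (simp add: lincomb_independent_def)
  then show ?thesis
    by (simp add: y_def[symmetric] fun_eq_iff)
qed

lemma lincomb_coords_diff:
  assumes "lincomb_independent m b" "u \<in> range (lincomb m b)" "w \<in> range (lincomb m b)"
  shows "lincomb_coords m b (u - w) = (\<lambda>i. lincomb_coords m b u i - lincomb_coords m b w i)"
proof -
  let ?x = "\<lambda>i. lincomb_coords m b u i - lincomb_coords m b w i"
  have "?x \<in> fin_coords m"
    using lincomb_lincomb_coords(1)[OF assms(2)] lincomb_lincomb_coords(1)[OF assms(3)]
    by (simp add: fin_coords_def)
  moreover have "lincomb m b ?x = u - w"
    using assms(2,3) by (simp add: lincomb_diff lincomb_lincomb_coords(2))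
  ultimately show ?thesis
    using lincomb_coords_lincomb[OF assms(1), of ?x] by simp
qed

lemma span_finite_eq_range_lincomb:
  fixes B :: "'a::real_vector set"
  assumes "finite B"
  obtains m b where "span B = range (lincomb m b)" "lincomb_independent m b"
proof -
  obtain B0 where B0: "B0 \<subseteq> B" "independent B0" "B \<subseteq> span B0"
    using real_vector.maximal_independent_subset[of B] by blast
  have fin: "finite B0"
    using B0(1) assms finite_subset by blast
  have span_eq: "span B0 = span B"
    using B0 by (metis real_vector.span_mono real_vector.span_span subset_antisym)
  define m where "m = card B0"
  obtain b where b: "bij_betw b {..<m} B0"
    using ex_bij_betw_nat_finite[OF fin] by (auto simp: atLeast0LessThan m_def)
  have reindex: "(\<Sum>v\<in>B0. u v *\<^sub>R v) = lincomb m b (\<lambda>i. u (b i))" for u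
    using sum.reindex_bij_betw[OF b, of "\<lambda>v. u v *\<^sub>R v"] by (simp add: lincomb_def)
  have b_in: "b i \<in> B0" if "i < m" for i
    using b that by (auto simp: bij_betw_def)
  have "span B0 = range (lincomb m b)"
  proof
    show "span B0 \<subseteq> range (lincomb m b)"
      using reindex real_vector.span_finite[OF fin] by auto
    show "range (lincomb m b) \<subseteq> span B0"
    proof clarify
      fix x
      show "lincomb m b x \<in> span B0"
        unfolding lincomb_def using b_in
        by (intro real_vector.span_sum real_vector.span_scale real_vector.span_base) auto
    qed
  qed
  moreover have "lincomb_independent m b"
    unfolding lincomb_independent_def
  proof (intro ballI impI)
    fix x assume x: "x \<in> fin_coords m" "lincomb m b x = 0"
    define u where "u v = x (the_inv_into {..<m} b v)" for v
    have "lincomb m b (\<lambda>i. u (b i)) = lincomb m b x"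
      using b unfolding lincomb_def
      by (intro sum.cong) (auto simp: u_def the_inv_into_f_f bij_betw_def)
    then have "\<forall>v\<in>B0. u v = 0"
      using x(2) reindex B0(2) real_vector.dependent_finite[OF fin] by metis
    then have "x i = 0" if "i < m" for i
      using b_in[OF that] b that unfolding u_def bij_betw_def
      by (metis lessThan_iff the_inv_into_f_f)
    then show "x = (\<lambda>i. 0)"
      using x(1) by (auto simp: fin_coords_def fun_eq_iff) (meson not_le)
  qed
  ultimately show thesis
    using that span_eq by metis
qed

context
  assumes tvs: "invariant_metric_tvs TYPE('a::{real_vector,metric_space})"
begin

lemma continuous_on_lincomb:
  assumes "continuous_on A f"
  shows "continuous_on A (\<lambda>z. lincomb m (b :: nat \<Rightarrow> 'a) (f z))"
proof -
  have "continuous_on A (\<lambda>z. f z i)" for i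
    using assms by (rule continuous_on_product_then_coordinatewise)
  then show ?thesis
    unfolding lincomb_def
    by (intro continuous_on_sum_tvs[OF tvs] continuous_on_scaleR_tvs[OF tvs] continuous_on_const)
qed

lemma lincomb_small_if_coord_norm_small:
  assumes "e > 0"
  shows "\<exists>r>0. \<forall>x. coord_norm m x \<le> r \<longrightarrow> dist 0 (lincomb m (b :: nat \<Rightarrow> 'a) x) \<le> e"
proof -
  define e' where "e' = e / (m + 1)"
  have "continuous_on UNIV (\<lambda>l::real. l *\<^sub>R b i)" for i
    by (intro continuous_on_scaleR_tvs[OF tvs] continuous_on_id continuous_on_const)
  then have "isCont (\<lambda>l::real. l *\<^sub>R b i) 0" for i
    by (simp add: continuous_on_eq_continuous_at)
  then have "((\<lambda>l::real. l *\<^sub>R b i) \<longlongrightarrow> 0) (at 0)" for i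
    by (simp add: isCont_def)
  then have "\<forall>\<^sub>F l in at (0::real). \<forall>i\<in>{..<m}. dist (l *\<^sub>R b i) 0 < e'"
    using assms by (intro eventually_ball_finite ballI tendstoD) (auto simp: e'_def)
  then obtain d where d: "d > 0"
    "\<And>l i. l \<noteq> 0 \<Longrightarrow> dist l 0 < d \<Longrightarrow> i < m \<Longrightarrow> dist (l *\<^sub>R b i) 0 < e'"
    unfolding eventually_at by auto
  have "dist 0 (lincomb m b x) \<le> e" if "coord_norm m x \<le> d / 2" for x
  proof -
    have "dist 0 (x i *\<^sub>R b i) \<le> e'" if "i < m" for i
    proof (cases "x i = 0")
      case False
      have "\<bar>x i\<bar> < d"
        using abs_coord_le_coord_norm[OF that, of x] \<open>coord_norm m x \<le> d / 2\<close> d(1) by linarith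
      then show ?thesis
        using d(2)[OF False _ that] by (simp add: dist_commute less_imp_le)
    qed (use assms in \<open>simp add: e'_def\<close>)
    then have "dist 0 (lincomb m b x) \<le> (\<Sum>i<m. e')"
      unfolding lincomb_def by (intro order.trans[OF dist0_sum_le[OF tvs]] sum_mono) auto
    also have "\<dots> \<le> e"
      using assms by (simp add: e'_def field_simps)
    finally show ?thesis .
  qed
  then show ?thesis
    using d(1) by (intro exI[of _ "d / 2"]) auto
qed

lemma lincomb_bounded_below_on_coord_sphere:
  assumes "lincomb_independent m (b :: nat \<Rightarrow> 'a)" "0 < m"
  obtains \<eta> where "\<eta> > 0" "\<And>x. x \<in> coord_sphere m 1 \<Longrightarrow> \<eta> \<le> dist 0 (lincomb m b x)"
proof -
  have "(\<Sum>i<m. (if i = 0 then 1 else 0 :: real)\<^sup>2) = (\<Sum>i<m. if i = 0 then 1 else 0)"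
    by (intro sum.cong) auto
  then have "(\<lambda>i. if i = 0 then 1 else 0) \<in> coord_sphere m 1"
    using assms(2) by (simp add: coord_sphere_def fin_coords_def coord_norm_def)
  moreover have "continuous_on (coord_sphere m 1) (\<lambda>x. dist 0 (lincomb m b x))"
    by (intro continuous_on_dist continuous_on_const continuous_on_lincomb continuous_on_id)
  ultimately obtain x0 where x0: "x0 \<in> coord_sphere m 1"
    "\<And>y. y \<in> coord_sphere m 1 \<Longrightarrow> dist 0 (lincomb m b x0) \<le> dist 0 (lincomb m b y)"
    using continuous_attains_inf[OF compact_coord_sphere] by blast
  have "x0 \<noteq> (\<lambda>i. 0)"
    using x0(1) by (auto simp: coord_sphere_def coord_norm_def)
  then have "dist 0 (lincomb m b x0) > 0"
    using assms(1) x0(1) by (auto simp: lincomb_independent_def coord_sphere_def)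
  then show thesis
    using that x0(2) by blast
qed

lemma coord_norm_bounded_if_lincomb_small:
  assumes "lincomb_independent m (b :: nat \<Rightarrow> 'a)"
  obtains d where "d > 0"
    "\<And>x. x \<in> fin_coords m \<Longrightarrow> dist 0 (lincomb m b x) < d \<Longrightarrow> coord_norm m x \<le> 1 / d"
proof (cases "m = 0")
  case True
  then show thesis
    using that[of 1] by (simp add: coord_norm_def)
next
  case False
  obtain \<eta> where \<eta>: "\<eta> > 0" "\<And>x. x \<in> coord_sphere m 1 \<Longrightarrow> \<eta> \<le> dist 0 (lincomb m b x)"
    using lincomb_bounded_below_on_coord_sphere[OF assms] False by blast
  obtain d where d: "d > 0" "\<And>(l::real) (z::'a). \<bar>l\<bar> < d \<Longrightarrow> dist 0 z < d \<Longrightarrow> dist 0 (l *\<^sub>R z) < \<eta>"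
    using scaleR_small_small[OF tvs \<eta>(1)] by blast
  have "coord_norm m x \<le> 1 / d" if x: "x \<in> fin_coords m" "dist 0 (lincomb m b x) < d" for x
  proof (rule ccontr)
    assume "\<not> ?thesis"
    then have big: "coord_norm m x > 1 / d" by simp
    define l where "l = 1 / coord_norm m x"
    have pos: "coord_norm m x > 0"
      using big d(1) by (smt (verit) divide_pos_pos)
    have "l < d"
      using big pos d(1) by (simp add: l_def field_simps)
    moreover have "l > 0"
      using pos by (simp add: l_def)
    moreover have "(\<lambda>i. l * x i) \<in> coord_sphere m 1"
      using x(1) pos coord_norm_scale[of m l x] by (simp add: l_def coord_sphere_def fin_coords_def)
    ultimately have "\<eta> \<le> dist 0 (l *\<^sub>R lincomb m b x)" "dist 0 (l *\<^sub>R lincomb m b x) < \<eta>"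
      using \<eta>(2)[of "\<lambda>i. l * x i"] d(2)[of l "lincomb m b x"] x(2) by (simp_all add: lincomb_scale)
    then show False
      by simp
  qed
  then show thesis
    using that d(1) by blast
qed

lemma coord_norm_small_if_lincomb_small:
  assumes "lincomb_independent m (b :: nat \<Rightarrow> 'a)" "\<rho> > 0"
  shows "\<exists>\<delta>>0. \<forall>x\<in>fin_coords m. dist 0 (lincomb m b x) < \<delta> \<longrightarrow> coord_norm m x < \<rho>"
proof -
  obtain d where d: "d > 0"
    "\<And>x. x \<in> fin_coords m \<Longrightarrow> dist 0 (lincomb m b x) < d \<Longrightarrow> coord_norm m x \<le> 1 / d"
    using coord_norm_bounded_if_lincomb_small[OF assms(1)] by blast
  obtain k :: nat where k: "real k > 1 / (d * \<rho>)"
    using reals_Archimedean2 by blast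
  have k_pos: "real k > 0"
    using k d(1) assms(2) by (smt (verit) divide_pos_pos mult_pos_pos)
  have "coord_norm m x < \<rho>" if x: "x \<in> fin_coords m" "dist 0 (lincomb m b x) < d / k" for x
  proof -
    have "dist 0 (lincomb m b (\<lambda>i. real k * x i)) \<le> real k * dist 0 (lincomb m b x)"
      by (simp add: lincomb_scale dist0_of_nat_scaleR_le[OF tvs])
    also have "\<dots> < d"
      using x(2) k_pos by (simp add: field_simps)
    finally have "real k * coord_norm m x \<le> 1 / d"
      using d(2)[of "\<lambda>i. real k * x i"] x(1) by (simp add: coord_norm_scale fin_coords_def)
    then have "coord_norm m x \<le> 1 / (d * k)"
      using k_pos d(1) by (simp add: field_simps)
    also have "\<dots> < \<rho>"
      using k k_pos d(1) assms(2) by (simp add: field_simps)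
    finally show ?thesis .
  qed
  then show ?thesis
    using d(1) k_pos by (intro exI[of _ "d / k"]) auto
qed

lemma continuous_on_lincomb_coords:
  assumes "lincomb_independent m (b :: nat \<Rightarrow> 'a)"
  shows "continuous_on (range (lincomb m b)) (lincomb_coords m b)"
proof (rule continuous_on_coordinatewise_then_product)
  fix i
  show "continuous_on (range (lincomb m b)) (\<lambda>w. lincomb_coords m b w i)"
    unfolding continuous_on_iff
  proof (intro ballI allI impI)
    fix w0 and \<epsilon> :: real
    assume w0: "w0 \<in> range (lincomb m b)" and "\<epsilon> > 0"
    then obtain \<delta> where \<delta>: "\<delta> > 0"
      "\<forall>x\<in>fin_coords m. dist 0 (lincomb m b x) < \<delta> \<longrightarrow> coord_norm m x < \<epsilon>"
      using coord_norm_small_if_lincomb_small[OF assms] by blast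
    have "dist (lincomb_coords m b w i) (lincomb_coords m b w0 i) < \<epsilon>"
      if w: "w \<in> range (lincomb m b)" "dist w w0 < \<delta>" for w
    proof -
      let ?x = "lincomb_coords m b (w - w0)"
      have diff: "?x = (\<lambda>i. lincomb_coords m b w i - lincomb_coords m b w0 i)"
        using lincomb_coords_diff[OF assms w(1) w0] .
      obtain y y0 where "w = lincomb m b y" "w0 = lincomb m b y0"
        using w(1) w0 by blast
      then have "w - w0 \<in> range (lincomb m b)"
        by (simp add: lincomb_diff[symmetric])
      then have "?x \<in> fin_coords m" "lincomb m b ?x = w - w0"
        by (rule lincomb_lincomb_coords)+
      moreover have "dist 0 (w - w0) < \<delta>"
        using w(2) dist_eq_dist0_diff[OF tvs, of w0 w] by (simp add: dist_commute)
      ultimately have "coord_norm m ?x < \<epsilon>"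
        using \<delta>(2) by simp
      moreover have "\<bar>?x i\<bar> \<le> coord_norm m ?x"
        using \<open>?x \<in> fin_coords m\<close> abs_coord_le_coord_norm[of i m ?x] coord_norm_nonneg[of m ?x]
        by (cases "i < m") (auto simp: fin_coords_def)
      ultimately show ?thesis
        by (simp add: diff dist_real_def)
    qed
    then show "\<exists>\<delta>>0. \<forall>w\<in>range (lincomb m b). dist w w0 < \<delta> \<longrightarrow>
        dist (lincomb_coords m b w i) (lincomb_coords m b w0 i) < \<epsilon>"
      using \<delta>(1) by blast
  qed
qed

end

section \<open>Compositions of local semigroups with continuous controls\<close>

lemma comp_lsg_append:
  "comp_lsg (xs @ ys) u = (case comp_lsg xs u of None \<Rightarrow> None | Some w \<Rightarrow> comp_lsg ys w)"
  by (induction xs arbitrary: u) (auto split: option.splits)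

lemma is_family_continuous_at:
  assumes "is_family (Phi, Z)" "p \<in> Z" "s \<ge> 0" "Phi s u p = Some w" "e > 0"
  obtains \<delta> where "\<delta> > 0"
    "\<And>u' p'. p' \<in> Z \<Longrightarrow> dist u u' < \<delta> \<Longrightarrow> dist p p' < \<delta> \<Longrightarrow>
       \<exists>w'. Phi s u' p' = Some w' \<and> dist w w' < e"
proof -
  have "\<forall>t\<ge>0. \<forall>w. Phi t u p = Some w \<longrightarrow> (\<forall>e>0. \<exists>\<delta>>0. \<forall>t'\<ge>0. \<forall>u'. \<forall>p'\<in>Z.
      \<bar>t - t'\<bar> + dist u u' + dist p p' < \<delta> \<longrightarrow> (\<exists>w'. Phi t' u' p' = Some w' \<and> dist w w' < e))"
    using assms(1,2) unfolding is_family_def by simp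
  then obtain \<delta> where \<delta>: "\<delta> > 0" "\<forall>t'\<ge>0. \<forall>u'. \<forall>p'\<in>Z.
      \<bar>s - t'\<bar> + dist u u' + dist p p' < \<delta> \<longrightarrow> (\<exists>w'. Phi t' u' p' = Some w' \<and> dist w w' < e)"
    using assms(3-5) by blast
  show thesis
  proof (rule that[of "\<delta> / 2"])
    fix u' p' assume "p' \<in> Z" "dist u u' < \<delta> / 2" "dist p p' < \<delta> / 2"
    then show "\<exists>w'. Phi s u' p' = Some w' \<and> dist w w' < e"
      using \<delta>(2) assms(3) by simp
  qed (use \<delta>(1) in simp)
qed

definition controlled_comp :: "(('a, 'p) family \<times> ('x \<Rightarrow> 'p) \<times> real) list \<Rightarrow> 'x \<Rightarrow> 'a \<Rightarrow> 'a option" where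
  "controlled_comp zs x = comp_lsg (map (\<lambda>(F, g, s). (\<lambda>\<tau> y. fst F \<tau> y (g x), s)) zs)"

definition continuous_controls :: "'x::topological_space set \<Rightarrow>
    (('a::metric_space, 'p::metric_space) family \<times> ('x \<Rightarrow> 'p) \<times> real) list \<Rightarrow> bool" where
  "continuous_controls K zs \<longleftrightarrow>
     (\<forall>(F, g, s)\<in>set zs. is_family F \<and> s > 0 \<and> continuous_on K g \<and> g ` K \<subseteq> snd F)"

lemma controlled_comp_Nil [simp]: "controlled_comp [] x y = Some y"
  by (simp add: controlled_comp_def)

lemma controlled_comp_Cons:
  "controlled_comp ((F, g, s) # zs) x y =
     (case fst F s y (g x) of None \<Rightarrow> None | Some w \<Rightarrow> controlled_comp zs x w)"
  by (cases "fst F s y (g x)") (simp_all add: controlled_comp_def)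

lemma continuous_controls_Cons [simp]:
  "continuous_controls K ((F, g, s) # zs) \<longleftrightarrow>
     is_family F \<and> s > 0 \<and> continuous_on K g \<and> g ` K \<subseteq> snd F \<and> continuous_controls K zs"
  by (simp add: continuous_controls_def)

lemma controlled_comp_locally_near:
  assumes "continuous_controls K zs" "x0 \<in> K" "controlled_comp zs x0 y0 = Some w0" "\<epsilon> > 0"
  obtains U \<eta> where "open U" "x0 \<in> U" "\<eta> > 0"
    "\<And>x y. x \<in> U \<inter> K \<Longrightarrow> dist y y0 < \<eta> \<Longrightarrow> \<exists>w. controlled_comp zs x y = Some w \<and> dist w w0 < \<epsilon>"
  using assms
proof (induction zs arbitrary: y0 thesis)
  case Nil
  show ?case
    by (rule Nil.prems(1)[of UNIV \<epsilon>]) (use Nil.prems in auto)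
next
  case (Cons z zs)
  obtain Phi Z g s where z: "z = ((Phi, Z), g, s)"
    by (metis prod.exhaust)
  have fam: "is_family (Phi, Z)" and s: "s > 0" and cont_g: "continuous_on K g" and gK: "g ` K \<subseteq> Z"
    and controls: "continuous_controls K zs"
    using Cons.prems(2) z by auto
  obtain y1 where y1: "Phi s y0 (g x0) = Some y1" "controlled_comp zs x0 y1 = Some w0"
    using Cons.prems(4) z by (auto simp: controlled_comp_Cons split: option.splits)
  obtain U1 \<eta>1 where U1: "open U1" "x0 \<in> U1" "\<eta>1 > 0"
    "\<And>x y. x \<in> U1 \<inter> K \<Longrightarrow> dist y y1 < \<eta>1 \<Longrightarrow> \<exists>w. controlled_comp zs x y = Some w \<and> dist w w0 < \<epsilon>"
    using Cons.IH[OF _ controls Cons.prems(3) y1(2) Cons.prems(5)] by blast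
  obtain \<delta> where \<delta>: "\<delta> > 0"
    "\<And>u' p'. p' \<in> Z \<Longrightarrow> dist y0 u' < \<delta> \<Longrightarrow> dist (g x0) p' < \<delta> \<Longrightarrow>
       \<exists>w'. Phi s u' p' = Some w' \<and> dist y1 w' < \<eta>1"
    using is_family_continuous_at[OF fam _ less_imp_le[OF s] y1(1) U1(3)] gK Cons.prems(3)
    by blast
  obtain A where A: "open A" "x0 \<in> A" "\<forall>x\<in>K. x \<in> A \<longrightarrow> g x \<in> ball (g x0) \<delta>"
    using continuous_on_topological[THEN iffD1, OF cont_g, rule_format, OF Cons.prems(3),
        of "ball (g x0) \<delta>"] \<delta>(1) by auto
  show ?case
  proof (rule Cons.prems(1)[of "U1 \<inter> A" \<delta>])
    fix x y assume x: "x \<in> U1 \<inter> A \<inter> K" and y: "dist y y0 < \<delta>"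
    have "g x \<in> Z" "dist y0 y < \<delta>" "dist (g x0) (g x) < \<delta>"
      using A(3) gK x y by (auto simp: dist_commute)
    then obtain w' where w': "Phi s y (g x) = Some w'" "dist y1 w' < \<eta>1"
      using \<delta>(2) by blast
    then obtain w where "controlled_comp zs x w' = Some w" "dist w w0 < \<epsilon>"
      using U1(4)[of x w'] x by (auto simp: dist_commute)
    then show "\<exists>w. controlled_comp (z # zs) x y = Some w \<and> dist w w0 < \<epsilon>"
      using w' z by (simp add: controlled_comp_Cons)
  qed (use U1 A \<delta> in auto)
qed

lemma continuous_on_controlled_comp:
  assumes "continuous_controls K zs" "\<And>x. x \<in> K \<Longrightarrow> controlled_comp zs x y \<noteq> None"
  shows "continuous_on K (\<lambda>x. the (controlled_comp zs x y))"
  unfolding continuous_on_topological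
proof (intro ballI allI impI)
  fix x0 B assume x0: "x0 \<in> K" and B: "open B" "the (controlled_comp zs x0 y) \<in> B"
  obtain w0 where w0: "controlled_comp zs x0 y = Some w0"
    using assms(2)[OF x0] by blast
  obtain \<epsilon> where \<epsilon>: "\<epsilon> > 0" "ball w0 \<epsilon> \<subseteq> B"
    using B w0 open_contains_ball by force
  obtain U \<eta> where U: "open U" "x0 \<in> U" "\<eta> > 0"
    "\<And>x y'. x \<in> U \<inter> K \<Longrightarrow> dist y' y < \<eta> \<Longrightarrow> \<exists>w. controlled_comp zs x y' = Some w \<and> dist w w0 < \<epsilon>"
    using controlled_comp_locally_near[OF assms(1) x0 w0 \<epsilon>(1)] by blast
  have "the (controlled_comp zs x y) \<in> B" if "x \<in> K" "x \<in> U" for x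
    using U(3) U(4)[of x y] \<epsilon>(2) that by (force simp: dist_commute)
  then show "\<exists>A. open A \<and> x0 \<in> A \<and> (\<forall>x\<in>K. x \<in> A \<longrightarrow> the (controlled_comp zs x y) \<in> B)"
    using U(1,2) by blast
qed

lemma controlled_comp_uniformly_near:
  assumes controls: "continuous_controls K zs" and "compact K"
    and defined: "\<And>x. x \<in> K \<Longrightarrow> controlled_comp zs x y0 \<noteq> None" and "\<epsilon> > 0"
  obtains \<eta> where "\<eta> > 0" "\<And>x y. x \<in> K \<Longrightarrow> dist y y0 < \<eta> \<Longrightarrow>
    \<exists>w. controlled_comp zs x y = Some w \<and> dist w (the (controlled_comp zs x y0)) < \<epsilon>"
proof (cases "K = {}")
  case True
  then show thesis
    using that[of 1] by simp
next
  case False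
  define c where "c x = the (controlled_comp zs x y0)" for x
  have "\<exists>U \<eta>. open U \<and> x0 \<in> U \<and> \<eta> > 0 \<and> (\<forall>x\<in>U \<inter> K. \<forall>y. dist y y0 < \<eta> \<longrightarrow>
          (\<exists>w. controlled_comp zs x y = Some w \<and> dist w (c x0) < \<epsilon> / 2))" if "x0 \<in> K" for x0
  proof -
    have "controlled_comp zs x0 y0 = Some (c x0)"
      using defined[OF that] by (auto simp: c_def)
    from controlled_comp_locally_near[OF controls that this, of "\<epsilon> / 2"] \<open>\<epsilon> > 0\<close>
    show ?thesis
      by (metis half_gt_zero)
  qed
  then obtain U \<eta> where U: "\<And>x0. x0 \<in> K \<Longrightarrow> open (U x0) \<and> x0 \<in> U x0 \<and> \<eta> x0 > 0 \<and>
      (\<forall>x\<in>U x0 \<inter> K. \<forall>y. dist y y0 < \<eta> x0 \<longrightarrow>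
         (\<exists>w. controlled_comp zs x y = Some w \<and> dist w (c x0) < \<epsilon> / 2))"
    by metis
  obtain T where T: "T \<subseteq> K" "finite T" "K \<subseteq> (\<Union>x0\<in>T. U x0)"
    using compactE_image[OF \<open>compact K\<close>, of K U] U by blast
  then have "T \<noteq> {}"
    using False by auto
  then have \<eta>_pos: "Min (\<eta> ` T) > 0"
    using T U by (auto simp: Min_gr_iff)
  have "\<exists>w. controlled_comp zs x y = Some w \<and> dist w (c x) < \<epsilon>"
    if x: "x \<in> K" and y: "dist y y0 < Min (\<eta> ` T)" for x y
  proof -
    obtain x0 where x0: "x0 \<in> T" "x \<in> U x0"
      using T(3) x by blast
    then have "Min (\<eta> ` T) \<le> \<eta> x0"
      using T(2) by simp
    moreover have near: "\<forall>x\<in>U x0 \<inter> K. \<forall>y. dist y y0 < \<eta> x0 \<longrightarrow>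
        (\<exists>w. controlled_comp zs x y = Some w \<and> dist w (c x0) < \<epsilon> / 2)" "\<eta> x0 > 0"
      using U[of x0] T(1) x0(1) by blast+
    ultimately have "dist y y0 < \<eta> x0"
      using y by linarith
    then obtain w where w: "controlled_comp zs x y = Some w" "dist w (c x0) < \<epsilon> / 2"
      using near(1) x0(2) x by blast
    obtain w' where w': "controlled_comp zs x y0 = Some w'" "dist w' (c x0) < \<epsilon> / 2"
      using near(1) x0(2) x dist_self[of y0] near(2) by (metis IntI)
    have "c x = w'"
      using w'(1) by (simp add: c_def)
    then show ?thesis
      using w w'(2) dist_triangle_half_l[of w "c x0" \<epsilon> w'] by (auto simp: dist_commute)
  qed
  then show thesis
    using that[OF \<eta>_pos] by (simp add: c_def)
qed

lemma controlled_steps_in_DD: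
  assumes "\<forall>(F, g, s)\<in>set zs. F \<in> FF \<and> s > 0 \<and> g x \<in> snd F"
  shows "\<forall>(S, s)\<in>set (map (\<lambda>(F, g, s). (\<lambda>\<tau> y. fst F \<tau> y (g x), s)) zs). S \<in> DD FF \<and> s > 0"
proof clarsimp
  fix Phi Z g s assume "((Phi, Z), g, s) \<in> set zs"
  then have "(Phi, Z) \<in> FF" "s > 0" "g x \<in> Z"
    using assms by fastforce+
  then show "(\<lambda>\<tau> y. Phi \<tau> y (g x)) \<in> DD FF \<and> 0 < s"
    unfolding DD_def by (intro conjI CollectI exI[of _ Phi] exI[of _ Z] exI[of _ "g x"]) simp_all
qed

lemma approx_start_of_controlled_comp:
  assumes approx: "\<forall>u. \<forall>t>0. closure (attainable F u t) = UNIV"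
    and controls: "continuous_controls K zs" and "compact K" and "T > 0"
    and near: "\<And>y. y \<in> K \<Longrightarrow> \<exists>w. controlled_comp zs y u0 = Some w \<and> dist w y \<le> c"
    and "c < \<epsilon>"
  obtains xs w1 where "\<forall>(S, s)\<in>set xs. S \<in> F \<and> s > 0" "sum_list (map snd xs) = T"
    "comp_lsg xs u = Some w1" "\<And>y. y \<in> K \<Longrightarrow> \<exists>w. controlled_comp zs y w1 = Some w \<and> dist w y < \<epsilon>"
proof -
  have "controlled_comp zs y u0 \<noteq> None" if "y \<in> K" for y
    using near[OF that] by auto
  moreover have "\<epsilon> - c > 0"
    using \<open>c < \<epsilon>\<close> by simp
  ultimately obtain \<eta> where \<eta>: "\<eta> > 0" "\<And>y y'. y \<in> K \<Longrightarrow> dist y' u0 < \<eta> \<Longrightarrow>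
      \<exists>w. controlled_comp zs y y' = Some w \<and> dist w (the (controlled_comp zs y u0)) < \<epsilon> - c"
    using controlled_comp_uniformly_near[OF controls \<open>compact K\<close>] by blast
  have "u0 \<in> closure (attainable F u T)"
    using approx \<open>T > 0\<close> by simp
  then obtain w1 where "w1 \<in> attainable F u T" "dist w1 u0 < \<eta>"
    using \<eta>(1) unfolding closure_approachable by blast
  then obtain xs where xs: "\<forall>(S, s)\<in>set xs. S \<in> F \<and> s > 0" "sum_list (map snd xs) = T"
    "comp_lsg xs u = Some w1"
    by (auto simp: attainable_def)
  have "\<exists>w. controlled_comp zs y w1 = Some w \<and> dist w y < \<epsilon>" if y: "y \<in> K" for y
  proof -
    obtain w0 where w0: "controlled_comp zs y u0 = Some w0" "dist w0 y \<le> c"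
      using near[OF y] by blast
    obtain w where w: "controlled_comp zs y w1 = Some w" "dist w w0 < \<epsilon> - c"
      using \<eta>(2)[OF y \<open>dist w1 u0 < \<eta>\<close>] w0(1) by auto
    then show ?thesis
      using w0(2) dist_triangle[of w y w0] by auto
  qed
  then show thesis
    using that xs by blast
qed

section \<open>Continuous perturbations of the identity hit the fibres of a finite-rank projection\<close>

context
  fixes \<pi> :: "'a::{real_vector,metric_space} \<Rightarrow> 'a" and m :: nat and b :: "nat \<Rightarrow> 'a"
  assumes tvs: "invariant_metric_tvs TYPE('a)"
    and lin: "linear \<pi>" and cont: "continuous_on UNIV \<pi>" and proj: "\<forall>x. \<pi> (\<pi> x) = \<pi> x"
    and rng: "range \<pi> = range (lincomb m b)" and indep: "lincomb_independent m b"
begin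

lemma projection_lincomb: "\<pi> (lincomb m b x) = lincomb m b x"
  using rng proj by (metis rangeE rangeI)

lemma projection_in_range_lincomb: "\<pi> z \<in> range (lincomb m b)"
  unfolding rng[symmetric] by simp

lemma lincomb_coords_projection:
  "lincomb_coords m b (\<pi> z) \<in> fin_coords m" "lincomb m b (lincomb_coords m b (\<pi> z)) = \<pi> z"
  using projection_in_range_lincomb by (rule lincomb_lincomb_coords)+

lemma continuous_on_lincomb_coords_projection:
  "continuous_on A (\<lambda>z. lincomb_coords m b (\<pi> z))"
  by (rule continuous_on_compose2[OF continuous_on_lincomb_coords[OF tvs indep]
        continuous_on_subset[OF cont]]) (auto simp: projection_in_range_lincomb)

lemma lincomb_coords_projection_small:
  assumes "\<rho> > 0"
  obtains \<delta> where "\<delta> > 0" "\<And>z. dist 0 z < \<delta> \<Longrightarrow> coord_norm m (lincomb_coords m b (\<pi> z)) < \<rho>"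
proof -
  obtain \<delta> where \<delta>: "\<delta> > 0"
    "\<forall>x\<in>fin_coords m. dist 0 (lincomb m b x) < \<delta> \<longrightarrow> coord_norm m x < \<rho>"
    using coord_norm_small_if_lincomb_small[OF tvs indep assms] by blast
  have "isCont \<pi> 0"
    using cont by (simp add: continuous_on_eq_continuous_at)
  then obtain d where d: "d > 0" "\<And>z. dist z 0 < d \<Longrightarrow> dist (\<pi> z) (\<pi> 0) < \<delta>"
    using \<delta>(1) unfolding continuous_at_eps_delta by blast
  have "coord_norm m (lincomb_coords m b (\<pi> z)) < \<rho>" if "dist 0 z < d" for z
    using d(2)[of z] that \<delta>(2) lincomb_coords_projection[of z] linear_0[OF lin]
    by (simp add: dist_commute)
  then show thesis
    using that d(1) by blast
qed

lemma lincomb_coords_projection_offset: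
  assumes "x \<in> fin_coords m"
  shows "lincomb_coords m b (\<pi> (z - (v + lincomb m b x))) =
           (\<lambda>i. lincomb_coords m b (\<pi> (z - v)) i - x i)"
proof -
  have "\<pi> (z - (v + lincomb m b x)) = \<pi> (z - v) - lincomb m b x"
    using linear_diff[OF lin, of "z - v" "lincomb m b x"] by (simp add: projection_lincomb diff_diff_eq)
  moreover have "lincomb m b x \<in> range (lincomb m b)"
    by simp
  ultimately show ?thesis
    using lincomb_coords_diff[OF indep projection_in_range_lincomb]
      lincomb_coords_lincomb[OF indep assms] by simp
qed

text \<open>In coordinates, the map sending y to the coordinates of \<pi> (out (r y) - v), divided by r,
  moves points of the unit sphere by less than one unit, so it has a zero on the unit ball.\<close>

lemma projection_hits_fibre:
  assumes "r > 0" and cont_out: "continuous_on (coord_ball m r) out"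
    and close: "\<And>x. x \<in> coord_sphere m r \<Longrightarrow>
      coord_norm m (lincomb_coords m b (\<pi> (out x - (v + lincomb m b x)))) < r"
  shows "\<exists>x\<in>coord_ball m r. \<pi> (out x) = \<pi> v"
proof -
  define c where "c z = lincomb_coords m b (\<pi> z)" for z
  define sc where "sc y = (\<lambda>j. r * y j)" for y :: "nat \<Rightarrow> real"
  define G where "G y = (\<lambda>i. c (out (sc y) - v) i / r)" for y
  have sc_ball: "sc y \<in> coord_ball m r" if "y \<in> coord_ball m 1" for y
    using that coord_norm_scale[of m r y] \<open>r > 0\<close>
    by (auto simp: sc_def coord_ball_def fin_coords_def)
  have sc_sphere: "sc y \<in> coord_sphere m r" if "y \<in> coord_sphere m 1" for y
    using that coord_norm_scale[of m r y] \<open>r > 0\<close>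
    by (auto simp: sc_def coord_sphere_def fin_coords_def)
  have "continuous_on (coord_ball m 1) sc"
    unfolding sc_def
    by (intro continuous_on_coordinatewise_then_product continuous_intros
        continuous_on_product_then_coordinatewise[OF continuous_on_id])
  then have "continuous_on (coord_ball m 1) (\<lambda>y. out (sc y) - v)"
    unfolding diff_conv_add_uminus using sc_ball
    by (intro continuous_on_add_tvs[OF tvs] continuous_on_compose2[OF cont_out] continuous_on_const) auto
  then have "continuous_on (coord_ball m 1) (\<lambda>y. c (out (sc y) - v))"
    unfolding c_def
    by (rule continuous_on_compose2[OF continuous_on_lincomb_coords_projection[of UNIV]]) simp
  then have "continuous_on (coord_ball m 1) (\<lambda>y. c (out (sc y) - v) i)" for i
    by (rule continuous_on_product_then_coordinatewise)
  then have "continuous_on (coord_ball m 1) G"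
    unfolding G_def using \<open>r > 0\<close>
    by (intro continuous_on_coordinatewise_then_product continuous_on_divide continuous_on_const) auto
  moreover have "G ` coord_ball m 1 \<subseteq> fin_coords m"
    using lincomb_coords_projection(1) by (auto simp: G_def c_def fin_coords_def)
  moreover have "coord_norm m (\<lambda>i. G y i - y i) < 1" if y: "y \<in> coord_sphere m 1" for y
  proof -
    have "sc y \<in> fin_coords m"
      using sc_sphere[OF y] by (simp add: coord_sphere_def)
    then have "(\<lambda>i. G y i - y i) = (\<lambda>i. (1 / r) * c (out (sc y) - (v + lincomb m b (sc y))) i)"
      using \<open>r > 0\<close> by (simp add: G_def c_def lincomb_coords_projection_offset sc_def field_simps)
    then have "coord_norm m (\<lambda>i. G y i - y i) =
        \<bar>1 / r\<bar> * coord_norm m (c (out (sc y) - (v + lincomb m b (sc y))))"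
      by (simp only: coord_norm_scale)
    also have "\<dots> < 1"
      using close[OF sc_sphere[OF y]] \<open>r > 0\<close> by (simp add: c_def)
    finally show ?thesis .
  qed
  ultimately obtain y where y: "y \<in> coord_ball m 1" "G y = (\<lambda>i. 0)"
    using coord_ball_map_has_zero by blast
  then have "c (out (sc y) - v) = (\<lambda>i. 0)"
    using \<open>r > 0\<close> by (simp add: G_def fun_eq_iff)
  then have "\<pi> (out (sc y) - v) = 0"
    using lincomb_coords_projection(2)[of "out (sc y) - v"] by (simp add: c_def)
  then have "\<pi> (out (sc y)) = \<pi> v"
    by (simp add: linear_diff[OF lin])
  then show ?thesis
    using sc_ball[OF y(1)] by blast
qed

lemma projection_near_identity_hits_fibre:
  assumes "e > 0"
  obtains r \<epsilon> where "r > 0" "\<epsilon> > 0" "\<And>x. x \<in> coord_ball m r \<Longrightarrow> dist 0 (lincomb m b x) \<le> e"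
    "\<And>out. continuous_on (coord_ball m r) out \<Longrightarrow>
       (\<And>x. x \<in> coord_ball m r \<Longrightarrow> dist (out x) (v + lincomb m b x) < \<epsilon>) \<Longrightarrow>
       \<exists>x\<in>coord_ball m r. \<pi> (out x) = \<pi> v"
proof -
  obtain r where r: "r > 0" "\<And>x. coord_norm m x \<le> r \<Longrightarrow> dist 0 (lincomb m b x) \<le> e"
    using lincomb_small_if_coord_norm_small[OF tvs assms] by blast
  obtain \<epsilon> where \<epsilon>: "\<epsilon> > 0" "\<And>z. dist 0 z < \<epsilon> \<Longrightarrow> coord_norm m (lincomb_coords m b (\<pi> z)) < r"
    using lincomb_coords_projection_small[OF r(1)] by blast
  have hits: "\<exists>x\<in>coord_ball m r. \<pi> (out x) = \<pi> v"
    if cont_out: "continuous_on (coord_ball m r) out"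
      and close: "\<And>x. x \<in> coord_ball m r \<Longrightarrow> dist (out x) (v + lincomb m b x) < \<epsilon>" for out
  proof -
    have "coord_norm m (lincomb_coords m b (\<pi> (out x - (v + lincomb m b x)))) < r"
      if x: "x \<in> coord_sphere m r" for x
    proof -
      have "x \<in> coord_ball m r"
        using x by (simp add: coord_sphere_def coord_ball_def)
      then have "dist (v + lincomb m b x) (out x) < \<epsilon>"
        using close by (simp add: dist_commute)
      then have "dist 0 (out x - (v + lincomb m b x)) < \<epsilon>"
        using dist_eq_dist0_diff[OF tvs, of "v + lincomb m b x" "out x"] by simp
      then show ?thesis
        by (rule \<epsilon>(2))
    qed
    then show ?thesis
      by (rule projection_hits_fibre[OF r(1) cont_out])
  qed
  have "dist 0 (lincomb m b x) \<le> e" if "x \<in> coord_ball m r" for x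
    using r(2) that by (simp add: coord_ball_def)
  then show thesis
    using hits by (rule that[OF r(1) \<epsilon>(1)])
qed

end

lemma finite_rank_projection_hits_fibre:
  fixes \<pi> :: "'a::{real_vector,metric_space} \<Rightarrow> 'a"
  assumes tvs: "invariant_metric_tvs TYPE('a)"
    and lin: "linear \<pi>" and cont: "continuous_on UNIV \<pi>" and proj: "\<forall>x. \<pi> (\<pi> x) = \<pi> x"
    and findim: "\<exists>B. finite B \<and> range \<pi> = span B" and "e > 0"
  obtains D \<epsilon> where "compact D" "D \<subseteq> Bpi \<pi> v e" "\<epsilon> > 0"
    "\<And>out. continuous_on D out \<Longrightarrow> (\<And>y. y \<in> D \<Longrightarrow> dist (out y) y < \<epsilon>) \<Longrightarrow>
       \<exists>y\<in>D. \<pi> (out y) = \<pi> v"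
proof -
  obtain B where "finite B" "range \<pi> = span B"
    using findim by blast
  then obtain m b where rng: "range \<pi> = range (lincomb m b)" and indep: "lincomb_independent m b"
    by (metis span_finite_eq_range_lincomb)
  obtain r \<epsilon> where "r > 0" "\<epsilon> > 0"
    and small: "\<And>x. x \<in> coord_ball m r \<Longrightarrow> dist 0 (lincomb m b x) \<le> e"
    and hits: "\<And>out. continuous_on (coord_ball m r) out \<Longrightarrow>
       (\<And>x. x \<in> coord_ball m r \<Longrightarrow> dist (out x) (v + lincomb m b x) < \<epsilon>) \<Longrightarrow>
       \<exists>x\<in>coord_ball m r. \<pi> (out x) = \<pi> v"
    using projection_near_identity_hits_fibre[OF tvs lin cont proj rng indep \<open>e > 0\<close>, where v = v]
    by blast
  define D where "D = (\<lambda>x. v + lincomb m b x) ` coord_ball m r"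
  have cont_D: "continuous_on (coord_ball m r) (\<lambda>x. v + lincomb m b x)"
    by (intro continuous_on_add_tvs[OF tvs] continuous_on_const continuous_on_lincomb[OF tvs]
        continuous_on_id)
  have "compact D"
    unfolding D_def using compact_coord_ball cont_D by (rule compact_continuous_image[rotated])
  moreover have "D \<subseteq> Bpi \<pi> v e"
    using small rng by (auto simp: D_def Bpi_def)
  moreover have "\<exists>y\<in>D. \<pi> (out y) = \<pi> v"
    if cont_out: "continuous_on D out" and close: "\<And>y. y \<in> D \<Longrightarrow> dist (out y) y < \<epsilon>" for out
  proof -
    have "continuous_on (coord_ball m r) (\<lambda>x. out (v + lincomb m b x))"
      using cont_D by (rule continuous_on_compose2[OF cont_out]) (auto simp: D_def)
    then obtain x where "x \<in> coord_ball m r" "\<pi> (out (v + lincomb m b x)) = \<pi> v"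
      using hits close by (fastforce simp: D_def)
    then show ?thesis
      by (auto simp: D_def)
  qed
  ultimately show thesis
    using that \<open>\<epsilon> > 0\<close> by blast
qed

lemma continuous_reachable_endpoints:
  assumes approx: "\<forall>u. \<forall>t>0. closure (attainable (DD FF) u t) = UNIV"
    and FF: "\<forall>F\<in>FF. is_family F" and "compact V" and "V \<subseteq> W" and "T > 0" and "c < \<epsilon>"
    and xs: "\<forall>(F, g, s)\<in>set xs. F \<in> FF \<and> s > 0 \<and> continuous_on W g \<and> g ` W \<subseteq> snd F"
    and near: "\<And>y. y \<in> V \<Longrightarrow> \<exists>w. controlled_comp xs y u0 = Some w \<and> dist w y \<le> c"
  obtains out where "continuous_on V out" "\<And>y. y \<in> V \<Longrightarrow> dist (out y) y < \<epsilon>"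
    "\<And>y. y \<in> V \<Longrightarrow> \<exists>ys. (\<forall>(S, s)\<in>set ys. S \<in> DD FF \<and> s > 0) \<and>
       sum_list (map snd ys) = T + sum_list (map (\<lambda>(F, g, s). s) xs) \<and> comp_lsg ys u = Some (out y)"
proof -
  have controls: "continuous_controls V xs"
    unfolding continuous_controls_def
  proof clarify
    fix F g s assume "(F, g, s) \<in> set xs"
    then have "F \<in> FF" "s > 0" "continuous_on W g" "g ` W \<subseteq> snd F"
      using xs by fastforce+
    then show "is_family F \<and> s > 0 \<and> continuous_on V g \<and> g ` V \<subseteq> snd F"
      using FF \<open>V \<subseteq> W\<close> by (blast intro: continuous_on_subset)
  qed
  obtain xs1 w1 where xs1: "\<forall>(S, s)\<in>set xs1. S \<in> DD FF \<and> s > 0" "sum_list (map snd xs1) = T"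
      "comp_lsg xs1 u = Some w1"
    and end_near: "\<And>y. y \<in> V \<Longrightarrow> \<exists>w. controlled_comp xs y w1 = Some w \<and> dist w y < \<epsilon>"
    using approx_start_of_controlled_comp[OF approx controls \<open>compact V\<close> \<open>T > 0\<close> near \<open>c < \<epsilon>\<close>,
        where u = u] by blast
  define out where "out y = the (controlled_comp xs y w1)" for y
  have out: "controlled_comp xs y w1 = Some (out y)" "dist (out y) y < \<epsilon>" if "y \<in> V" for y
    using end_near[OF that] by (auto simp: out_def)
  have cont_out: "continuous_on V out"
    unfolding out_def using controls out(1) by (intro continuous_on_controlled_comp) auto
  have reach: "\<exists>ys. (\<forall>(S, s)\<in>set ys. S \<in> DD FF \<and> s > 0) \<and>
      sum_list (map snd ys) = T + sum_list (map (\<lambda>(F, g, s). s) xs) \<and> comp_lsg ys u = Some (out y)"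
    if "y \<in> V" for y
  proof (intro exI conjI)
    let ?steps = "map (\<lambda>(F, g, s). (\<lambda>\<tau> z. fst F \<tau> z (g y), s)) xs"
    have "(F, g, s) \<in> set xs \<Longrightarrow> F \<in> FF \<and> s > 0 \<and> g y \<in> snd F" for F g s
      using bspec[OF xs] that \<open>V \<subseteq> W\<close> by fastforce
    then have "\<forall>(S, s)\<in>set ?steps. S \<in> DD FF \<and> s > 0"
      by (intro controlled_steps_in_DD) auto
    then show "\<forall>(S, s)\<in>set (xs1 @ ?steps). S \<in> DD FF \<and> s > 0"
      using xs1(1) by auto
    show "sum_list (map snd (xs1 @ ?steps)) = T + sum_list (map (\<lambda>(F, g, s). s) xs)"
      using xs1(2) by (simp add: case_prod_unfold o_def)
    show "comp_lsg (xs1 @ ?steps) u = Some (out y)"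
      using xs1(3) out(1)[OF that] by (simp add: comp_lsg_append controlled_comp_def)
  qed
  show thesis
    using cont_out out(2) reach by (rule that)
qed

theorem theorem3p11:
  fixes FF :: "('a::{real_vector,complete_space}, 'p::metric_space) family set"
    and \<pi> :: "'a \<Rightarrow> 'a"
  assumes frechet: "frechet_space TYPE('a)"
    and FF_sub: "\<forall>F\<in>FF. is_family F"
    and lin: "linear \<pi>"
    and cont: "continuous_on UNIV \<pi>"
    and proj: "\<forall>x. \<pi> (\<pi> x) = \<pi> x"
    and findim: "\<exists>B. finite B \<and> range \<pi> = span B"
    and approx: "\<forall>u. \<forall>t>0. closure (attainable (DD FF) u t) = UNIV"
    and hyp2: "\<forall>v. \<forall>e>0. \<forall>e'>0. \<forall>t>0. \<exists>u0 xs.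
        xs \<noteq> [] \<and>
        (\<forall>(F, g, s) \<in> set xs. F \<in> FF \<and> s > 0 \<and>
            continuous_on (Bpi \<pi> v e) g \<and> g ` Bpi \<pi> v e \<subseteq> snd F) \<and>
        sum_list (map (\<lambda>(F, g, s). s) xs) \<le> t \<and>
        (\<exists>c < e'. \<forall>v' \<in> Bpi \<pi> v e. \<exists>w.
            comp_lsg (map (\<lambda>(F, g, s). (\<lambda>\<tau> x. fst F \<tau> x (g v'), s)) xs) u0 = Some w \<and>
            dist w v' \<le> c)"
  shows "\<forall>u v. \<forall>t>0. \<forall>e>0. \<exists>xs w.
        (\<forall>(S, s) \<in> set xs. S \<in> DD FF \<and> s > 0) \<and>
        sum_list (map snd xs) = t \<and>
        comp_lsg xs u = Some w \<and> \<pi> w = \<pi> v \<and> dist w v < e"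
proof (intro allI impI)
  fix u v :: 'a and t e :: real
  assume "t > 0" "e > 0"
  have tvs: "invariant_metric_tvs TYPE('a)"
    using frechet by (rule frechet_space_imp_invariant_metric_tvs)
  have "e / 2 > 0"
    using \<open>e > 0\<close> by simp
  then obtain D \<epsilon> where "compact D" and D_sub: "D \<subseteq> Bpi \<pi> v (e / 2)" and "\<epsilon> > 0"
    and hits: "\<And>out. continuous_on D out \<Longrightarrow> (\<And>y. y \<in> D \<Longrightarrow> dist (out y) y < \<epsilon>) \<Longrightarrow>
       \<exists>y\<in>D. \<pi> (out y) = \<pi> v"
    using finite_rank_projection_hits_fibre[OF tvs lin cont proj findim, where v = v] by blast
  define \<epsilon>' where "\<epsilon>' = min \<epsilon> (e / 2)"
  obtain u0 xs c where xs: "\<forall>(F, g, s) \<in> set xs. F \<in> FF \<and> s > 0 \<and>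
        continuous_on (Bpi \<pi> v (e / 2)) g \<and> g ` Bpi \<pi> v (e / 2) \<subseteq> snd F"
      "sum_list (map (\<lambda>(F, g, s). s) xs) \<le> t / 2"
    and "c < \<epsilon>'"
    and near: "\<forall>v' \<in> Bpi \<pi> v (e / 2). \<exists>w. controlled_comp xs v' u0 = Some w \<and> dist w v' \<le> c"
    using spec[OF hyp2, of v, rule_format, where e = "e / 2" and e' = \<epsilon>' and t = "t / 2"]
      \<open>t > 0\<close> \<open>e > 0\<close> \<open>\<epsilon> > 0\<close>
    unfolding controlled_comp_def \<epsilon>'_def by auto
  define T where "T = t - sum_list (map (\<lambda>(F, g, s). s) xs)"
  have "T > 0"
    using xs(2) \<open>t > 0\<close> by (simp add: T_def)
  have "\<And>y. y \<in> D \<Longrightarrow> \<exists>w. controlled_comp xs y u0 = Some w \<and> dist w y \<le> c"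
    using near D_sub by blast
  then obtain out where cont_out: "continuous_on D out"
    and close: "\<And>y. y \<in> D \<Longrightarrow> dist (out y) y < \<epsilon>'"
    and reach: "\<And>y. y \<in> D \<Longrightarrow> \<exists>ys. (\<forall>(S, s)\<in>set ys. S \<in> DD FF \<and> s > 0) \<and>
       sum_list (map snd ys) = T + sum_list (map (\<lambda>(F, g, s). s) xs) \<and> comp_lsg ys u = Some (out y)"
    using continuous_reachable_endpoints[OF approx FF_sub \<open>compact D\<close> D_sub \<open>T > 0\<close> \<open>c < \<epsilon>'\<close> xs(1),
        where u = u] by blast
  obtain y where "y \<in> D" "\<pi> (out y) = \<pi> v"
    using hits[OF cont_out] close by (fastforce simp: \<epsilon>'_def)
  have "dist (out y) v \<le> dist (out y) y + dist y v"
    by (rule dist_triangle)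
  also have "\<dots> < e"
    using close[OF \<open>y \<in> D\<close>] Bpi_dist_le[OF tvs, of y \<pi> v "e / 2"] D_sub \<open>y \<in> D\<close>
    by (auto simp: \<epsilon>'_def)
  finally show "\<exists>xs w. (\<forall>(S, s)\<in>set xs. S \<in> DD FF \<and> s > 0) \<and> sum_list (map snd xs) = t \<and>
      comp_lsg xs u = Some w \<and> \<pi> w = \<pi> v \<and> dist w v < e"
    using reach[OF \<open>y \<in> D\<close>] \<open>\<pi> (out y) = \<pi> v\<close> by (auto simp: T_def)
qed

end
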